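(* Let $G=(V,E,w)$ be an $n$-vertex directed graph with real edge weights, let $h>0$ be an integer and $\tau\ge 2n^2$ an integer. The procedure $\textsc{DetPreprocessing}(G,\tau,h)$ described below can be implemented to run in $O(n^3 h)$ time.
   Context: Let $i_h=\lceil \log_{3/2} h\rceil$ and $h_i=(3/2)^i$ for $i=0,\dots,i_h$. A path is $h'$-hop-restricted if it has at most $h'$ edges. The procedure $\textsc{DetPreprocessing}(G,\tau,h)$: initialize $C\gets\emptyset$, $\textsc{Congestion}(v)\gets 0$ for all $v\in V$, and $\pi^i_{s,t}\gets\bot$ (the empty path of weight $\infty$) for all $s,t\in V$, $i\in[0,i_h]$. Then process every vertex $s\in V$ exactly once as a root, in an arbitrary order; for each root $s$ and each $i\in[0,i_h]$ in turn: (1) compute, by $h_i$ rounds of Bellman-Ford from $s$ in the induced graph $G[V\setminus C]$, paths $\pi^i_{s,t}$ for all $t\in V$ that are shortest among $h_i$-hop-restricted paths from $s$ to $t$ in $G[V\setminus C]$; (2) for every $t\in V$ and every vertex $u$ on $\pi^i_{s,t}$, increase $\textsc{Congestion}(u)$ by $\lceil n/h_i\rceil$; (3) set $C\gets\{v\in V:\textsc{Congestion}(v)>\tau/2\}$. *)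

theory Defs
  imports Complex_Main "HOL-Library.Extended_Real"
begin

text \<open>
  Vertices are 0..<n.  Edge weights: w u v :: ereal, where w u v = \<infinity> means
  "no edge (u,v)" and otherwise w u v is the real weight (-\<infinity> is excluded by
  an assumption of the theorem).  Distances are ereal with \<infinity> = unreachable.
  The empty path [] plays the role of \<bottom> (weight \<infinity>).

  Every elementary operation of the natural implementation is charged unit cost:
  one unit per relaxation of a pair (u,v) and per vertex initialisation in each
  Bellman-Ford round, one unit per step of path extraction via layered
  predecessor pointers, one unit per vertex on an extracted path for the
  congestion update, and n units for recomputing C.
\<close>

definition hop :: "nat \<Rightarrow> real" where
  "hop i = (3/2::real) ^ i"

definition rounds :: "nat \<Rightarrow> nat" where
  "rounds i = nat \<lfloor>hop i\<rfloor>"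

definition ihmax :: "nat \<Rightarrow> nat" where
  "ihmax h = nat \<lceil>log (3/2) (real h)\<rceil>"

definition cong_incr :: "nat \<Rightarrow> nat \<Rightarrow> nat" where
  "cong_incr n i = nat \<lceil>real n / hop i\<rceil>"

definition relax :: "nat \<Rightarrow> (nat \<Rightarrow> nat \<Rightarrow> ereal) \<Rightarrow> nat set \<Rightarrow> (nat \<Rightarrow> ereal)
    \<Rightarrow> nat \<Rightarrow> ereal \<times> nat option" where
  "relax n w C d v =
     foldl (\<lambda>(dv, pv) u. if u \<notin> C \<and> d u + w u v < dv then (d u + w u v, Some u) else (dv, pv))
       (d v, None) [0..<n]"

fun bf_layer :: "nat \<Rightarrow> (nat \<Rightarrow> nat \<Rightarrow> ereal) \<Rightarrow> nat set \<Rightarrow> nat \<Rightarrow> nat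
    \<Rightarrow> (nat \<Rightarrow> ereal) \<times> (nat \<Rightarrow> nat option)" where
  "bf_layer n w C s 0 = ((\<lambda>v. if v = s \<and> s \<notin> C then 0 else \<infinity>), (\<lambda>v. None))"
| "bf_layer n w C s (Suc k) =
     (let d = fst (bf_layer n w C s k) in
       ((\<lambda>v. if v < n \<and> v \<notin> C then fst (relax n w C d v) else d v),
        (\<lambda>v. if v < n \<and> v \<notin> C then snd (relax n w C d v) else None)))"

text \<open>Recovery of the path to t from layer k, together with its cost
  (number of pointer-following steps).\<close>
fun path_of :: "nat \<Rightarrow> (nat \<Rightarrow> nat \<Rightarrow> ereal) \<Rightarrow> nat set \<Rightarrow> nat \<Rightarrow> nat \<Rightarrow> nat
    \<Rightarrow> nat list \<times> nat" where
  "path_of n w C s 0 t = ((if t = s \<and> s \<notin> C then [s] else []), 1)"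
| "path_of n w C s (Suc k) t =
     (if fst (bf_layer n w C s (Suc k)) t = \<infinity> then ([], 1)
      else (case snd (bf_layer n w C s (Suc k)) t of
              None \<Rightarrow> (let r = path_of n w C s k t in (fst r, snd r + 1))
            | Some u \<Rightarrow> (let r = path_of n w C s k u in (fst r @ [t], snd r + 1))))"

type_synonym state = "nat set \<times> (nat \<Rightarrow> nat) \<times> nat"
  \<comment> \<open>(C, Congestion, accumulated cost)\<close>

definition proc_step :: "nat \<Rightarrow> (nat \<Rightarrow> nat \<Rightarrow> ereal) \<Rightarrow> nat \<Rightarrow> nat \<Rightarrow> nat
    \<Rightarrow> state \<Rightarrow> state" where
  "proc_step n w \<tau> s i st =
     (let (C, cong, cost) = st;
          H = rounds i;
          bf_cost = n + H * (n * (n + 1));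
          ex = map (\<lambda>t. path_of n w C s H t) [0..<n];
          paths = map fst ex;
          ex_cost = sum_list (map snd ex);
          upd_cost = sum_list (map length paths);
          cong' = (\<lambda>v. cong v + cong_incr n i * length (filter (\<lambda>p. v \<in> set p) paths));
          C' = {v. v < n \<and> real (cong' v) > real \<tau> / 2}
      in (C', cong', cost + bf_cost + ex_cost + upd_cost + n))"

text \<open>Whole procedure: roots in the given (arbitrary) order, levels i = 0..i_h.
  Returns the final state; its third component is the total cost.\<close>
definition det_preprocessing :: "nat \<Rightarrow> (nat \<Rightarrow> nat \<Rightarrow> ereal) \<Rightarrow> nat \<Rightarrow> nat \<Rightarrow> nat list
    \<Rightarrow> state" where
  "det_preprocessing n w \<tau> h order =
     foldl (\<lambda>st s. foldl (\<lambda>st' i. proc_step n w \<tau> s i st') st [0..<ihmax h + 1])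
       ({}, (\<lambda>v. 0), 0) order"

definition det_preprocessing_cost :: "nat \<Rightarrow> (nat \<Rightarrow> nat \<Rightarrow> ereal) \<Rightarrow> nat \<Rightarrow> nat
    \<Rightarrow> nat list \<Rightarrow> nat" where
  "det_preprocessing_cost n w \<tau> h order = snd (snd (det_preprocessing n w \<tau> h order))"

end

theory Submission
  imports Defs
begin

text \<open>
  Level \<open>i\<close> of one root costs \<open>O(n\<^sup>2 h\<^sub>i)\<close>: the \<open>h\<^sub>i\<close> Bellman-Ford rounds relax all
  \<open>n\<^sup>2\<close> pairs, while extracting the \<open>n\<close> paths and charging congestion along them costs
  \<open>O(n h\<^sub>i)\<close>, as each path has at most \<open>h\<^sub>i + 1\<close> vertices. The hop bounds grow
  geometrically and the last one is below \<open>3h/2\<close>, so one root costs \<open>O(n\<^sup>2 h)\<close> and the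
  \<open>n\<close> roots \<open>O(n\<^sup>3 h)\<close>. Neither \<open>\<tau>\<close> nor the edge weights matter for this bound.
\<close>

lemma snd_path_of_le: "snd (path_of n w C s k t) \<le> k + 1"
  by (induction k arbitrary: t) (simp_all add: Let_def del: bf_layer.simps split: option.split)

lemma length_path_of_le: "length (fst (path_of n w C s k t)) \<le> k + 1"
  by (induction k arbitrary: t)
    (simp_all add: Let_def le_SucI del: bf_layer.simps split: option.split)

lemma sum_list_le_length_mult:
  fixes f :: "'a \<Rightarrow> 'b::{ordered_semiring, semiring_1}"
  assumes "\<And>x. f x \<le> b"
  shows "(\<Sum>x\<leftarrow>xs. f x) \<le> of_nat (length xs) * b"
  using sum_list_mono[of xs f "\<lambda>_. b"] assms by (simp add: sum_list_triv)

lemma foldl_increase_le: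
  fixes f :: "'s \<Rightarrow> 'a::ordered_comm_monoid_add"
  assumes "\<And>st x. f (F st x) \<le> f st + g x"
  shows "f (foldl F st xs) \<le> f st + (\<Sum>x\<leftarrow>xs. g x)"
proof (induction xs arbitrary: st)
  case Nil
  then show ?case by simp
next
  case (Cons x xs)
  have "f (foldl F (F st x) xs) \<le> f (F st x) + (\<Sum>y\<leftarrow>xs. g y)"
    by (rule Cons.IH)
  also have "\<dots> \<le> f st + g x + (\<Sum>y\<leftarrow>xs. g y)"
    using assms by (rule add_right_mono)
  finally show ?case by (simp add: add.assoc)
qed

lemma proc_step_cost_le:
  "snd (snd (proc_step n w \<tau> s i st)) \<le> snd (snd st) + 4 * n\<^sup>2 * (1 + rounds i)"
proof -
  obtain C cong cost where st: "st = (C, cong, cost)"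
    by (cases st) auto
  define H where "H = rounds i"
  define ex where "ex = map (path_of n w C s H) [0..<n]"
  have extraction: "(\<Sum>r\<leftarrow>ex. snd r) \<le> n * (H + 1)"
    using sum_list_le_length_mult[of "\<lambda>t. snd (path_of n w C s H t)" _ "[0..<n]",
        OF snd_path_of_le]
    by (simp add: ex_def comp_def)
  have update: "(\<Sum>r\<leftarrow>ex. length (fst r)) \<le> n * (H + 1)"
    using sum_list_le_length_mult[of "\<lambda>t. length (fst (path_of n w C s H t))" _ "[0..<n]",
        OF length_path_of_le]
    by (simp add: ex_def comp_def)
  have "snd (snd (proc_step n w \<tau> s i st))
      = cost + (n + H * (n * (n + 1))) + (\<Sum>r\<leftarrow>ex. snd r) + (\<Sum>r\<leftarrow>ex. length (fst r)) + n"
    by (simp add: proc_step_def st H_def ex_def Let_def comp_def)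
  also have "\<dots> \<le> cost + (4 * n + H * (n * n + 3 * n))"
    using extraction update by (simp add: algebra_simps)
  also have "\<dots> \<le> cost + (4 * (n * n) + H * (n * n + 3 * (n * n)))"
    using le_square[of n] by (intro add_left_mono add_mono mult_left_mono) simp_all
  also have "\<dots> = cost + 4 * n\<^sup>2 * (1 + H)"
    by (simp add: power2_eq_square algebra_simps)
  finally show ?thesis
    by (simp add: st H_def)
qed

lemma det_preprocessing_cost_le:
  "det_preprocessing_cost n w \<tau> h order
     \<le> length order * (4 * n\<^sup>2 * (\<Sum>i\<le>ihmax h. 1 + rounds i))"
proof -
  let ?root_cost = "\<Sum>i\<leftarrow>[0..<ihmax h + 1]. 4 * n\<^sup>2 * (1 + rounds i)"
  have root: "snd (snd (foldl (\<lambda>st' i. proc_step n w \<tau> s i st') st [0..<ihmax h + 1]))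
      \<le> snd (snd st) + ?root_cost" for s st
    by (rule foldl_increase_le) (rule proc_step_cost_le)
  have "det_preprocessing_cost n w \<tau> h order
      \<le> (\<Sum>s\<leftarrow>order. ?root_cost)"
    using foldl_increase_le[where f = "\<lambda>st. snd (snd st)" and g = "\<lambda>_. ?root_cost"
        and F = "\<lambda>st s. foldl (\<lambda>st' i. proc_step n w \<tau> s i st') st [0..<ihmax h + 1]"
        and st = "({}, \<lambda>v. 0, 0)" and xs = order, OF root]
    by (simp add: det_preprocessing_cost_def det_preprocessing_def)
  also have "\<dots> = length order * (4 * n\<^sup>2 * (\<Sum>i\<le>ihmax h. 1 + rounds i))"
    by (simp only: sum_list_triv sum_list_const_mult of_nat_id interv_sum_list_conv_sum_set_nat
        set_upt atLeast0LessThan Suc_eq_plus1[symmetric] lessThan_Suc_atMost)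
  finally show ?thesis .
qed

lemma rounds_le_hop: "real (rounds i) \<le> hop i"
  unfolding rounds_def hop_def by simp

lemma hop_ihmax_le:
  assumes "h > 0"
  shows "hop (ihmax h) \<le> 3/2 * real h"
proof -
  have "log (3/2) (real h) \<ge> 0"
    using assms by simp
  then have "real (ihmax h) < log (3/2) (real h) + 1"
    unfolding ihmax_def by linarith
  then have "(3/2::real) powr real (ihmax h) \<le> (3/2) powr (log (3/2) (real h) + 1)"
    by (intro powr_mono) auto
  also have "\<dots> = 3/2 * real h"
    using assms by (simp add: powr_add)
  finally show ?thesis
    by (simp add: hop_def powr_realpow)
qed

lemma sum_rounds_upto_ihmax_le:
  assumes "h > 0"
  shows "(\<Sum>i\<le>ihmax h. 1 + real (rounds i)) \<le> 9 * real h"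
proof -
  have "(\<Sum>i\<le>ihmax h. 1 + real (rounds i)) \<le> (\<Sum>i<ihmax h + 1. 2 * (3/2::real) ^ i)"
    unfolding Suc_eq_plus1[symmetric] lessThan_Suc_atMost
  proof (rule sum_mono)
    fix i
    have "1 \<le> (3/2::real) ^ i"
      by simp
    moreover have "real (rounds i) \<le> (3/2) ^ i"
      using rounds_le_hop[of i] by (simp add: hop_def)
    ultimately show "1 + real (rounds i) \<le> 2 * (3/2::real) ^ i"
      by linarith
  qed
  also have "\<dots> = 4 * ((3/2) ^ (ihmax h + 1) - 1)"
    by (simp add: sum_distrib_left[symmetric] sum_gp_strict)
  also have "\<dots> \<le> 9 * real h"
    using hop_ihmax_le[OF assms] by (simp add: hop_def)
  finally show ?thesis .
qed

theorem lemma3p3: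
  "\<exists>c::real. c > 0 \<and>
     (\<forall>(n::nat) (w::nat \<Rightarrow> nat \<Rightarrow> ereal) (\<tau>::nat) (h::nat) (order::nat list).
        h > 0 \<longrightarrow> \<tau> \<ge> 2 * n^2 \<longrightarrow> (\<forall>u v. w u v \<noteq> -\<infinity>) \<longrightarrow>
        distinct order \<longrightarrow> set order = {0..<n} \<longrightarrow>
        real (det_preprocessing_cost n w \<tau> h order) \<le> c * real n ^ 3 * real h)"
proof (intro exI[of _ 36] conjI allI impI)
  fix n \<tau> h :: nat and w :: "nat \<Rightarrow> nat \<Rightarrow> ereal" and order :: "nat list"
  assume h: "h > 0" and "distinct order" and "set order = {0..<n}"
  then have "length order = n"
    using distinct_card by fastforce
  then have "real (det_preprocessing_cost n w \<tau> h order)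
      \<le> real (n * (4 * n\<^sup>2 * (\<Sum>i\<le>ihmax h. 1 + rounds i)))"
    using det_preprocessing_cost_le[of n w \<tau> h order] by (simp only: of_nat_le_iff)
  also have "\<dots> = real n * (4 * real n ^ 2 * (\<Sum>i\<le>ihmax h. 1 + real (rounds i)))"
    by simp
  also have "\<dots> \<le> real n * (4 * real n ^ 2 * (9 * real h))"
    using sum_rounds_upto_ihmax_le[OF h] by (intro mult_left_mono) auto
  finally show "real (det_preprocessing_cost n w \<tau> h order) \<le> 36 * real n ^ 3 * real h"
    by (simp add: power2_eq_square power3_eq_cube)
qed simp

end
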